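(* Let $(H,\Delta)$ be a Hopf algebra with invariant functionals and $(A,\alpha)$ an $I$-Galois object. Then there exists a left complete invariant functional $\psi_A:A\to k$, and there exists a right complete invariant functional $\psi'_A:A\to k$.
   Context: $H$ has invariant functionals: nonzero $\varphi,\psi:H\to k$ with $(\mathrm{id}\otimes\varphi)\Delta(h)=\varphi(h)1$, $(\psi\otimes\mathrm{id})\Delta(h)=\psi(h)1$. An $I$-Galois object is a right $H$-comodule algebra $(A,\alpha)$ (possibly non-unital) with bijective Galois map $A\otimes_{A^\alpha}A\to A\otimes H$, $a\otimes b\mapsto(a\otimes1)\alpha(b)$, and coinvariant algebra $A^\alpha$ identified with $k_I=\bigoplus_{i\in I}k$, minimal idempotents $p_i$. A linear functional $\psi_A:A\to k$ is invariant if $(\psi_A\otimes\mathrm{id})\alpha(x)=\psi_A(x)1_H$ for all $x\in A$; it is left complete if $\psi_A(p_i\,\cdot)\ne0$ for every $i\in I$, and right complete if $\psi_A(\cdot\,p_j)\neq0$ for every $j\in I$. *)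

theory Defs
  imports Complex_Main
begin

(* Vector spaces over a field 'k are abstract types with an explicit scalar
   multiplication satisfying Vector_Spaces.vector_space.
   Algebraic tensors V (x) W are represented by finite lists of pure tensors
   [(v1,w1),...]; two representatives denote the same tensor iff they agree
   under all pairs of linear functionals (for vector spaces over a field the
   canonical map V (x) W -> (V^* (x) W^* )^* is injective, so this is exactly
   equality in the algebraic tensor product). *)

definition tev :: "('v \<times> 'w) list \<Rightarrow> ('v \<Rightarrow> 'k::comm_ring) \<Rightarrow> ('w \<Rightarrow> 'k) \<Rightarrow> 'k" where
  "tev t f g = (\<Sum>(v,w)\<leftarrow>t. f v * g w)"

definition teq :: "('k::field \<Rightarrow> 'v::ab_group_add \<Rightarrow> 'v) \<Rightarrow> ('k \<Rightarrow> 'w::ab_group_add \<Rightarrow> 'w)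
    \<Rightarrow> ('v \<times> 'w) list \<Rightarrow> ('v \<times> 'w) list \<Rightarrow> bool" where
  "teq sV sW t u \<longleftrightarrow>
     (\<forall>f g. Vector_Spaces.linear sV ((*)::'k\<Rightarrow>'k\<Rightarrow>'k) f \<longrightarrow> Vector_Spaces.linear sW ((*)::'k\<Rightarrow>'k\<Rightarrow>'k) g
        \<longrightarrow> tev t f g = tev u f g)"

definition tev3 :: "('u \<times> 'v \<times> 'w) list \<Rightarrow> ('u \<Rightarrow> 'k::comm_ring) \<Rightarrow> ('v \<Rightarrow> 'k) \<Rightarrow> ('w \<Rightarrow> 'k) \<Rightarrow> 'k" where
  "tev3 t f g l = (\<Sum>(u,v,w)\<leftarrow>t. f u * g v * l w)"

definition teq3 :: "('k::field \<Rightarrow> 'u::ab_group_add \<Rightarrow> 'u) \<Rightarrow> ('k \<Rightarrow> 'v::ab_group_add \<Rightarrow> 'v)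
    \<Rightarrow> ('k \<Rightarrow> 'w::ab_group_add \<Rightarrow> 'w) \<Rightarrow> ('u \<times> 'v \<times> 'w) list \<Rightarrow> ('u \<times> 'v \<times> 'w) list \<Rightarrow> bool" where
  "teq3 sU sV sW t u \<longleftrightarrow>
     (\<forall>f g l. Vector_Spaces.linear sU ((*)::'k\<Rightarrow>'k\<Rightarrow>'k) f \<longrightarrow> Vector_Spaces.linear sV ((*)::'k\<Rightarrow>'k\<Rightarrow>'k) g
        \<longrightarrow> Vector_Spaces.linear sW ((*)::'k\<Rightarrow>'k\<Rightarrow>'k) l \<longrightarrow> tev3 t f g l = tev3 u f g l)"

definition tlinear :: "('k::field \<Rightarrow> 'x::ab_group_add \<Rightarrow> 'x) \<Rightarrow> ('k \<Rightarrow> 'v::ab_group_add \<Rightarrow> 'v)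
    \<Rightarrow> ('k \<Rightarrow> 'w::ab_group_add \<Rightarrow> 'w) \<Rightarrow> ('x \<Rightarrow> ('v \<times> 'w) list) \<Rightarrow> bool" where
  "tlinear sX sV sW F \<longleftrightarrow>
     (\<forall>f g. Vector_Spaces.linear sV ((*)::'k\<Rightarrow>'k\<Rightarrow>'k) f \<longrightarrow> Vector_Spaces.linear sW ((*)::'k\<Rightarrow>'k\<Rightarrow>'k) g
        \<longrightarrow> Vector_Spaces.linear sX ((*)::'k\<Rightarrow>'k\<Rightarrow>'k) (\<lambda>x. tev (F x) f g))"

definition tmult :: "('v \<Rightarrow> 'v \<Rightarrow> 'v) \<Rightarrow> ('w \<Rightarrow> 'w \<Rightarrow> 'w) \<Rightarrow> ('v \<times> 'w) list \<Rightarrow> ('v \<times> 'w) list \<Rightarrow> ('v \<times> 'w) list" where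
  "tmult mV mW t u = concat (map (\<lambda>(a,b). map (\<lambda>(c,d). (mV a c, mW b d)) u) t)"

definition map_left3 :: "('v \<Rightarrow> ('a \<times> 'b) list) \<Rightarrow> ('v \<times> 'w) list \<Rightarrow> ('a \<times> 'b \<times> 'w) list" where
  "map_left3 F t = concat (map (\<lambda>(v,w). map (\<lambda>(a,b). (a,b,w)) (F v)) t)"

definition map_right3 :: "('w \<Rightarrow> ('a \<times> 'b) list) \<Rightarrow> ('v \<times> 'w) list \<Rightarrow> ('v \<times> 'a \<times> 'b) list" where
  "map_right3 F t = concat (map (\<lambda>(v,w). map (\<lambda>(a,b). (v,a,b)) (F w)) t)"

definition bilinear_mult :: "('k::field \<Rightarrow> 'v::ab_group_add \<Rightarrow> 'v) \<Rightarrow> ('v \<Rightarrow> 'v \<Rightarrow> 'v) \<Rightarrow> bool" where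
  "bilinear_mult s m \<longleftrightarrow> (\<forall>x. Vector_Spaces.linear s s (m x)) \<and> (\<forall>y. Vector_Spaces.linear s s (\<lambda>x. m x y))"

definition k_algebra :: "('k::field \<Rightarrow> 'v::ab_group_add \<Rightarrow> 'v) \<Rightarrow> ('v \<Rightarrow> 'v \<Rightarrow> 'v) \<Rightarrow> bool" where
  "k_algebra s m \<longleftrightarrow> vector_space s \<and> bilinear_mult s m \<and> (\<forall>x y z. m (m x y) z = m x (m y z))"

definition hopf_algebra ::
  "('k::field \<Rightarrow> 'h::ab_group_add \<Rightarrow> 'h) \<Rightarrow> ('h \<Rightarrow> 'h \<Rightarrow> 'h) \<Rightarrow> 'h \<Rightarrow> ('h \<Rightarrow> ('h \<times> 'h) list)
     \<Rightarrow> ('h \<Rightarrow> 'k) \<Rightarrow> ('h \<Rightarrow> 'h) \<Rightarrow> bool" where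
  "hopf_algebra s m u D eps S \<longleftrightarrow>
     k_algebra s m \<and> (\<forall>x. m u x = x \<and> m x u = x) \<and>
     tlinear s s s D \<and>
     (\<forall>x y. teq s s (D (m x y)) (tmult m m (D x) (D y))) \<and>
     teq s s (D u) [(u,u)] \<and>
     (\<forall>x. teq3 s s s (map_left3 D (D x)) (map_right3 D (D x))) \<and>
     Vector_Spaces.linear s ((*)::'k\<Rightarrow>'k\<Rightarrow>'k) eps \<and>
     (\<forall>x y. eps (m x y) = eps x * eps y) \<and> eps u = 1 \<and>
     (\<forall>x. (\<Sum>(a,b)\<leftarrow>D x. s (eps a) b) = x \<and> (\<Sum>(a,b)\<leftarrow>D x. s (eps b) a) = x) \<and>
     Vector_Spaces.linear s s S \<and>
     (\<forall>x. (\<Sum>(a,b)\<leftarrow>D x. m (S a) b) = s (eps x) u \<and> (\<Sum>(a,b)\<leftarrow>D x. m a (S b)) = s (eps x) u)"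

definition has_invariant_functionals ::
  "('k::field \<Rightarrow> 'h::ab_group_add \<Rightarrow> 'h) \<Rightarrow> 'h \<Rightarrow> ('h \<Rightarrow> ('h \<times> 'h) list) \<Rightarrow> bool" where
  "has_invariant_functionals s u D \<longleftrightarrow>
     (\<exists>phi psi. Vector_Spaces.linear s ((*)::'k\<Rightarrow>'k\<Rightarrow>'k) phi \<and> Vector_Spaces.linear s ((*)::'k\<Rightarrow>'k\<Rightarrow>'k) psi \<and>
        (\<exists>x. phi x \<noteq> 0) \<and> (\<exists>x. psi x \<noteq> 0) \<and>
        (\<forall>x. (\<Sum>(a,b)\<leftarrow>D x. s (phi b) a) = s (phi x) u) \<and>
        (\<forall>x. (\<Sum>(a,b)\<leftarrow>D x. s (psi a) b) = s (psi x) u))"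

definition comodule_algebra ::
  "('k::field \<Rightarrow> 'a::ab_group_add \<Rightarrow> 'a) \<Rightarrow> ('a \<Rightarrow> 'a \<Rightarrow> 'a) \<Rightarrow> ('k \<Rightarrow> 'h::ab_group_add \<Rightarrow> 'h)
     \<Rightarrow> ('h \<Rightarrow> 'h \<Rightarrow> 'h) \<Rightarrow> ('h \<Rightarrow> ('h \<times> 'h) list) \<Rightarrow> ('h \<Rightarrow> 'k) \<Rightarrow> ('a \<Rightarrow> ('a \<times> 'h) list) \<Rightarrow> bool" where
  "comodule_algebra sA mA sH mH D eps alpha \<longleftrightarrow>
     k_algebra sA mA \<and> tlinear sA sA sH alpha \<and>
     (\<forall>x y. teq sA sH (alpha (mA x y)) (tmult mA mH (alpha x) (alpha y))) \<and>
     (\<forall>x. teq3 sA sH sH (map_left3 alpha (alpha x)) (map_right3 D (alpha x))) \<and>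
     (\<forall>x. (\<Sum>(a,h)\<leftarrow>alpha x. sA (eps h) a) = x)"

definition coinvariants :: "('k::field \<Rightarrow> 'a::ab_group_add \<Rightarrow> 'a) \<Rightarrow> ('k \<Rightarrow> 'h::ab_group_add \<Rightarrow> 'h) \<Rightarrow> 'h
     \<Rightarrow> ('a \<Rightarrow> ('a \<times> 'h) list) \<Rightarrow> 'a set" where
  "coinvariants sA sH u alpha = {a. teq sA sH (alpha a) [(a,u)]}"

definition galois_map :: "('a \<Rightarrow> 'a \<Rightarrow> 'a) \<Rightarrow> ('a \<Rightarrow> ('a \<times> 'h) list) \<Rightarrow> ('a \<times> 'a) list \<Rightarrow> ('a \<times> 'h) list" where
  "galois_map mA alpha t = concat (map (\<lambda>(a,b). map (\<lambda>(x,h). (mA a x, h)) (alpha b)) t)"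

(* t represents 0 in the balanced tensor product A (x)_B A, i.e. t lies (as an element of
   A (x) A) in the span of the elements  x c (x) y - x (x) c y  with c in B *)
definition balanced_zero :: "('k::field \<Rightarrow> 'a::ab_group_add \<Rightarrow> 'a) \<Rightarrow> ('a \<Rightarrow> 'a \<Rightarrow> 'a) \<Rightarrow> 'a set
     \<Rightarrow> ('a \<times> 'a) list \<Rightarrow> bool" where
  "balanced_zero sA mA B t \<longleftrightarrow>
     (\<exists>rs. (\<forall>(x,c,y)\<in>set rs. c \<in> B) \<and>
        teq sA sA t (concat (map (\<lambda>(x,c,y). [(mA x c, y), (x, sA (-1) (mA c y))]) rs)))"

(* I-Galois object; p i (i in I) are the minimal idempotents of A^alpha = k_I *)
definition I_galois_object ::
  "('k::field \<Rightarrow> 'a::ab_group_add \<Rightarrow> 'a) \<Rightarrow> ('a \<Rightarrow> 'a \<Rightarrow> 'a) \<Rightarrow> ('k \<Rightarrow> 'h::ab_group_add \<Rightarrow> 'h)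
     \<Rightarrow> ('h \<Rightarrow> 'h \<Rightarrow> 'h) \<Rightarrow> 'h \<Rightarrow> ('h \<Rightarrow> ('h \<times> 'h) list) \<Rightarrow> ('h \<Rightarrow> 'k)
     \<Rightarrow> ('a \<Rightarrow> ('a \<times> 'h) list) \<Rightarrow> 'i set \<Rightarrow> ('i \<Rightarrow> 'a) \<Rightarrow> bool" where
  "I_galois_object sA mA sH mH u D eps alpha I p \<longleftrightarrow>
     comodule_algebra sA mA sH mH D eps alpha \<and>
     \<comment> \<open>A^alpha is identified with k_I, with minimal idempotents p i\<close>
     (\<forall>i\<in>I. p i \<noteq> 0 \<and> mA (p i) (p i) = p i) \<and>
     (\<forall>i\<in>I. \<forall>j\<in>I. i \<noteq> j \<longrightarrow> mA (p i) (p j) = 0) \<and>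
     coinvariants sA sH u alpha = module.span sA (p ` I) \<and>
     \<comment> \<open>Galois map A (x)_{A^alpha} A -> A (x) H is injective and surjective\<close>
     (\<forall>t. teq sA sH (galois_map mA alpha t) [] \<longrightarrow> balanced_zero sA mA (coinvariants sA sH u alpha) t) \<and>
     (\<forall>v. \<exists>t. teq sA sH (galois_map mA alpha t) v)"

definition invariant_functional :: "('k::field \<Rightarrow> 'a::ab_group_add \<Rightarrow> 'a) \<Rightarrow> ('k \<Rightarrow> 'h::ab_group_add \<Rightarrow> 'h) \<Rightarrow> 'h
     \<Rightarrow> ('a \<Rightarrow> ('a \<times> 'h) list) \<Rightarrow> ('a \<Rightarrow> 'k) \<Rightarrow> bool" where
  "invariant_functional sA sH u alpha psiA \<longleftrightarrow>
     Vector_Spaces.linear sA ((*)::'k\<Rightarrow>'k\<Rightarrow>'k) psiA \<and>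
     (\<forall>x. (\<Sum>(a,h)\<leftarrow>alpha x. sH (psiA a) h) = sH (psiA x) u)"

definition left_complete :: "('a \<Rightarrow> 'a \<Rightarrow> 'a) \<Rightarrow> 'i set \<Rightarrow> ('i \<Rightarrow> 'a) \<Rightarrow> ('a \<Rightarrow> 'k::zero) \<Rightarrow> bool" where
  "left_complete mA I p psiA \<longleftrightarrow> (\<forall>i\<in>I. \<exists>x. psiA (mA (p i) x) \<noteq> 0)"

definition right_complete :: "('a \<Rightarrow> 'a \<Rightarrow> 'a) \<Rightarrow> 'i set \<Rightarrow> ('i \<Rightarrow> 'a) \<Rightarrow> ('a \<Rightarrow> 'k::zero) \<Rightarrow> bool" where
  "right_complete mA I p psiA \<longleftrightarrow> (\<forall>j\<in>I. \<exists>x. psiA (mA x (p j)) \<noteq> 0)"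

end

theory Submission
  imports Defs
begin

text \<open>Let \<open>\<psi>\<close> be the left invariant functional of \<open>H\<close> and \<open>E = (id \<otimes> \<psi>) \<circ> \<alpha> : A \<rightarrow> A\<close>
  the slice map. By coassociativity of \<open>\<alpha>\<close> and invariance of \<open>\<psi>\<close>, \<open>\<theta> \<circ> E\<close> is invariant for
  every linear \<open>\<theta>\<close>, and since \<open>\<alpha>(p\<^sub>i) = p\<^sub>i \<otimes> 1\<close>, \<open>E\<close> commutes with multiplication by the \<open>p\<^sub>i\<close>
  on either side. Completeness of \<open>\<theta> \<circ> E\<close> thus asks for \<open>\<theta>(E(y) p\<^sub>j) \<noteq> 0\<close>, resp.
  \<open>\<theta>(p\<^sub>i E(y)) \<noteq> 0\<close>. Surjectivity of the Galois map provides \<open>\<Sum> a\<^sub>k \<otimes> b\<^sub>k\<close> mapped to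
  \<open>p\<^sub>j \<otimes> h\<close>; then \<open>\<Sum> a\<^sub>k E(b\<^sub>k p\<^sub>j) = \<psi>(h) p\<^sub>j\<close>, so some \<open>E(y) p\<^sub>j\<close> is nonzero. On the
  left, the preimage of \<open>p\<^sub>i \<otimes> h\<close> gives \<open>\<Sum> p\<^sub>i E(a\<^sub>k) b\<^sub>k = \<psi>(S h) p\<^sub>i\<close> by the antipode axioms,
  and \<open>\<psi> \<circ> S \<noteq> 0\<close> because \<open>\<psi>(h) \<phi>(g) = \<Sum> \<psi>(S g\<^sub>1) \<phi>(g\<^sub>2 h)\<close> (Sweedler notation). Finally,
  nonzero vectors \<open>v\<^sub>i\<close> with \<open>v\<^sub>i p\<^sub>i = v\<^sub>i\<close> are linearly independent, as the \<open>p\<^sub>i\<close> are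
  orthogonal idempotents, so a single \<open>\<theta>\<close> takes the value \<open>1\<close> on all of them.\<close>

section \<open>Linear maps and functionals\<close>

lemmas linear_map_add = module_hom.add[OF module_hom_linearI]
lemmas linear_map_scale = module_hom.scale[OF module_hom_linearI]
lemmas linear_map_0 = module_hom.zero[OF module_hom_linearI]
lemmas linear_map_sum = module_hom.sum[OF module_hom_linearI]

lemma linear_map_sum_list:
  "Vector_Spaces.linear s1 s2 f \<Longrightarrow> f (sum_list xs) = sum_list (map f xs)"
  by (induction xs) (auto simp: linear_map_add linear_map_0)

lemma linear_map_compose:
  "Vector_Spaces.linear s1 s2 f \<Longrightarrow> Vector_Spaces.linear s2 s3 g \<Longrightarrow>
   Vector_Spaces.linear s1 s3 (\<lambda>x. g (f x))"
  using Vector_Spaces.linear_compose[of s1 s2 f s3 g] by (simp add: o_def)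

lemma vector_space_field: "vector_space ((*) :: 'k::field \<Rightarrow> 'k \<Rightarrow> 'k)"
  by unfold_locales (auto simp: algebra_simps)

lemma linear_functional_sum_list:
  assumes "vector_space s"
    and "\<And>y. y \<in> set ys \<Longrightarrow> Vector_Spaces.linear s ((*) :: 'k::field \<Rightarrow> _) (F y)"
  shows "Vector_Spaces.linear s ((*) :: 'k \<Rightarrow> _) (\<lambda>x. \<Sum>y\<leftarrow>ys. F y x)"
  using assms(2)
proof (induction ys)
  case Nil
  then show ?case using assms(1) vector_space_field by (auto simp: Vector_Spaces.linear_iff)
next
  case (Cons a ys)
  then have "Vector_Spaces.linear s (*) (F a)" "Vector_Spaces.linear s (*) (\<lambda>x. \<Sum>y\<leftarrow>ys. F y x)"
    by auto
  then show ?case unfolding Vector_Spaces.linear_iff by (auto simp: algebra_simps)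
qed

lemma linear_functional_mult_left:
  "Vector_Spaces.linear s ((*) :: 'k::field \<Rightarrow> _) f \<Longrightarrow> Vector_Spaces.linear s (*) (\<lambda>x. c * f x)"
  unfolding Vector_Spaces.linear_iff by (auto simp: algebra_simps)

lemma linear_functional_mult_right:
  "Vector_Spaces.linear s ((*) :: 'k::field \<Rightarrow> _) f \<Longrightarrow> Vector_Spaces.linear s (*) (\<lambda>x. f x * c)"
  unfolding Vector_Spaces.linear_iff by (auto simp: algebra_simps)

lemma exists_linear_functional_one_on:
  fixes s :: "'k::field \<Rightarrow> 'a::ab_group_add \<Rightarrow> 'a"
  assumes "vector_space s" "\<not> module.dependent s V"
  shows "\<exists>g. Vector_Spaces.linear s ((*) :: 'k \<Rightarrow> 'k \<Rightarrow> 'k) g \<and> (\<forall>x\<in>V. g x = 1)"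
proof -
  interpret vector_space_pair s "(*) :: 'k \<Rightarrow> 'k \<Rightarrow> 'k"
    using assms(1) vector_space_field by (simp add: vector_space_pair_def)
  show ?thesis using linear_independent_extend[OF assms(2), of "\<lambda>_. 1"] by auto
qed

lemma eq_by_linear_functionals:
  assumes "vector_space s"
    and "\<And>f. Vector_Spaces.linear s ((*) :: 'k::field \<Rightarrow> 'k \<Rightarrow> 'k) f \<Longrightarrow> f x = f y"
  shows "x = y"
proof (rule ccontr)
  assume "x \<noteq> y"
  then have "\<not> module.dependent s {x - y}"
    using assms(1) by (simp add: vector_space.dependent_single)
  then obtain g where g: "Vector_Spaces.linear s ((*) :: 'k \<Rightarrow> 'k \<Rightarrow> 'k) g" "g (x - y) = 1"
    using exists_linear_functional_one_on[OF assms(1)] by blast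
  have "g x = g y" using assms(2) g(1) by blast
  then show False using g linear_map_add[OF g(1), of "x - y" y] by simp
qed

lemma independent_idempotent_family:
  fixes m :: "'a::ab_group_add \<Rightarrow> 'a \<Rightarrow> 'a" and s :: "'k::field \<Rightarrow> 'a \<Rightarrow> 'a"
  assumes vs: "vector_space s"
    and assoc: "\<And>x y z. m (m x y) z = m x (m y z)"
    and lin: "\<And>y. Vector_Spaces.linear s s (\<lambda>x. m x y)"
    and zero: "\<And>x. m x 0 = 0"
    and orth: "\<And>i j. i \<in> I \<Longrightarrow> j \<in> I \<Longrightarrow> i \<noteq> j \<Longrightarrow> m (p i) (p j) = 0"
    and nonzero: "\<And>i. i \<in> I \<Longrightarrow> v i \<noteq> 0"
    and fixed: "\<And>i. i \<in> I \<Longrightarrow> m (v i) (p i) = v i"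
  shows "\<not> module.dependent s (v ` I)"
proof -
  interpret vector_space s by fact
  have killed: "m (v j) (p i) = 0" if "i \<in> I" "j \<in> I" "i \<noteq> j" for i j
    by (metis assoc orth[of j i] that fixed zero)
  show ?thesis
    unfolding independent_explicit_finite_subsets
  proof (intro allI impI ballI)
    fix T u w
    assume T: "T \<subseteq> v ` I" "finite T" and sum0: "(\<Sum>x\<in>T. s (u x) x) = 0" and w: "w \<in> T"
    obtain i where i: "i \<in> I" "w = v i" using T w by auto
    have others: "s (u x) (m x (p i)) = 0" if "x \<in> T - {w}" for x
      using that T i killed by fastforce
    have "0 = m (\<Sum>x\<in>T. s (u x) x) (p i)"
      using sum0 linear_map_0[OF lin] by simp
    also have "\<dots> = (\<Sum>x\<in>T. s (u x) (m x (p i)))"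
      by (simp add: linear_map_sum[OF lin] linear_map_scale[OF lin])
    also have "\<dots> = s (u w) (m w (p i)) + (\<Sum>x\<in>T - {w}. s (u x) (m x (p i)))"
      by (rule sum.remove[OF T(2) w])
    also have "\<dots> = s (u w) (m w (p i))"
      using sum.neutral[of "T - {w}"] others by (metis (no_types, lifting) add_0_right)
    also have "\<dots> = s (u w) w" using fixed i by simp
    finally show "u w = 0" using nonzero i by simp
  qed
qed

lemma exists_functional_one_on_idempotent_family:
  fixes m :: "'a::ab_group_add \<Rightarrow> 'a \<Rightarrow> 'a" and s :: "'k::field \<Rightarrow> 'a \<Rightarrow> 'a"
  assumes "vector_space s"
    and "\<And>x y z. m (m x y) z = m x (m y z)"
    and "\<And>y. Vector_Spaces.linear s s (\<lambda>x. m x y)"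
    and "\<And>x. m x 0 = 0"
    and "\<And>i j. i \<in> I \<Longrightarrow> j \<in> I \<Longrightarrow> i \<noteq> j \<Longrightarrow> m (p i) (p j) = 0"
    and "\<And>i. i \<in> I \<Longrightarrow> v i \<noteq> 0"
    and "\<And>i. i \<in> I \<Longrightarrow> m (v i) (p i) = v i"
  shows "\<exists>g. Vector_Spaces.linear s ((*) :: 'k \<Rightarrow> 'k \<Rightarrow> 'k) g \<and> (\<forall>i\<in>I. g (v i) = 1)"
proof -
  have "\<not> module.dependent s (v ` I)"
    by (rule independent_idempotent_family[of s m I p v]) (fact assms)+
  then obtain g where "Vector_Spaces.linear s ((*) :: 'k \<Rightarrow> 'k \<Rightarrow> 'k) g" "\<forall>x\<in>v ` I. g x = 1"
    using exists_linear_functional_one_on[OF assms(1)] by blast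
  then show ?thesis by auto
qed

section \<open>Tensors represented by lists of pure tensors\<close>

lemma sum_list_swap:
  "(\<Sum>x\<leftarrow>xs. \<Sum>y\<leftarrow>ys. f x y) = (\<Sum>y\<leftarrow>ys. \<Sum>x\<leftarrow>xs. f x y)"
  for f :: "_ \<Rightarrow> _ \<Rightarrow> 'c::comm_monoid_add"
  by (induction xs) (auto simp: sum_list_addf)

lemma sum_list_pairs_swap:
  "(\<Sum>(a,b)\<leftarrow>xs. \<Sum>(c,d)\<leftarrow>ys. F a b c d) = (\<Sum>(c,d)\<leftarrow>ys. \<Sum>(a,b)\<leftarrow>xs. F a b c d)"
  for F :: "_ \<Rightarrow> _ \<Rightarrow> _ \<Rightarrow> _ \<Rightarrow> 'c::comm_monoid_add"
  using sum_list_swap[of "\<lambda>x y. F (fst x) (snd x) (fst y) (snd y)" ys xs] by (simp add: split_def)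

lemma sum_list_sum_swap:
  "(\<Sum>x\<leftarrow>xs. \<Sum>b\<in>F. g x b) = (\<Sum>b\<in>F. \<Sum>x\<leftarrow>xs. g x b)"
  by (induction xs) (auto simp: sum.distrib)

lemma sum_list_nonzeroE:
  assumes "(\<Sum>(a,b)\<leftarrow>t. f a b) \<noteq> (0 :: 'c::monoid_add)"
  obtains a b where "(a,b) \<in> set t" "f a b \<noteq> 0"
proof -
  have "\<exists>(a,b)\<in>set t. f a b \<noteq> 0" using assms by (induction t) auto
  then show ?thesis using that by blast
qed

lemma sum_list_galois_map:
  "(\<Sum>(x,h)\<leftarrow>galois_map mA alpha t. B x h) = (\<Sum>(a,b)\<leftarrow>t. \<Sum>(x,h)\<leftarrow>alpha b. B (mA a x) h)"
  by (induction t) (auto simp: galois_map_def o_def case_prod_beta)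

lemma sum_list_tmult:
  "(\<Sum>(x,y)\<leftarrow>tmult mV mW t u. B x y) = (\<Sum>(a,b)\<leftarrow>t. \<Sum>(c,d)\<leftarrow>u. B (mV a c) (mW b d))"
  by (induction t) (auto simp: tmult_def o_def case_prod_beta)

lemma sum_list_map_left3:
  "(\<Sum>(u,v,w)\<leftarrow>map_left3 F t. T u v w) = (\<Sum>(v,w)\<leftarrow>t. \<Sum>(a,b)\<leftarrow>F v. T a b w)"
  by (induction t) (auto simp: map_left3_def o_def case_prod_beta)

lemma sum_list_map_right3:
  "(\<Sum>(u,v,w)\<leftarrow>map_right3 F t. T u v w) = (\<Sum>(v,w)\<leftarrow>t. \<Sum>(a,b)\<leftarrow>F w. T v a b)"
  by (induction t) (auto simp: map_right3_def o_def case_prod_beta)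

lemma teq3_sym: "teq3 sU sV sW t t' \<Longrightarrow> teq3 sU sV sW t' t"
  unfolding teq3_def by metis

text \<open>Coordinates with respect to a Hamel basis; they reduce bilinear and trilinear forms to
  sums of products of linear functionals, on which \<open>teq\<close> and \<open>teq3\<close> are defined.\<close>

lemma vector_space_coordinates:
  assumes "vector_space s"
  obtains r :: "'b::ab_group_add \<Rightarrow> 'b \<Rightarrow> 'k::field" where
    "\<And>b. Vector_Spaces.linear s (*) (\<lambda>w. r w b)"
    "\<And>w. finite {b. r w b \<noteq> 0}"
    "\<And>w F. finite F \<Longrightarrow> {b. r w b \<noteq> 0} \<subseteq> F \<Longrightarrow> (\<Sum>b\<in>F. s (r w b) b) = w"
proof -
  interpret vector_space s by fact
  obtain B where B: "independent B" "UNIV \<subseteq> span B"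
    using basis_exists[of UNIV] by blast
  then have span: "span B = UNIV" by auto
  show ?thesis
  proof (rule that[of "representation B"])
    show "Vector_Spaces.linear s (*) (\<lambda>w. representation B w b)" for b
      using linear_representation[OF B(1) span] .
    show "finite {b. representation B w b \<noteq> 0}" for w
      by (rule finite_representation)
    show "(\<Sum>b\<in>F. s (representation B w b) b) = w"
      if "finite F" "{b. representation B w b \<noteq> 0} \<subseteq> F" for w F
    proof -
      have "(\<Sum>b\<in>F. s (representation B w b) b) =
          (\<Sum>b | representation B w b \<noteq> 0. s (representation B w b) b)"
        by (rule sum.mono_neutral_right) (use that in auto)
      also have "\<dots> = w" using sum_nonzero_representation_eq[OF B(1)] span by auto
      finally show ?thesis .
    qed
  qed
qed

lemma teq_sum_bilinear:
  assumes te: "teq sV sW t t'" and vsW: "vector_space sW"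
    and l1: "\<And>w. Vector_Spaces.linear sV ((*) :: 'k::field \<Rightarrow> 'k \<Rightarrow> 'k) (\<lambda>v. B v w)"
    and l2: "\<And>v. Vector_Spaces.linear sW ((*) :: 'k \<Rightarrow> 'k \<Rightarrow> 'k) (B v)"
  shows "(\<Sum>(v,w)\<leftarrow>t. B v w) = (\<Sum>(v,w)\<leftarrow>t'. B v w)"
proof -
  obtain r :: "_ \<Rightarrow> _ \<Rightarrow> 'k" where r: "\<And>b. Vector_Spaces.linear sW (*) (\<lambda>w. r w b)"
    "\<And>w. finite {b. r w b \<noteq> 0}"
    "\<And>w F. finite F \<Longrightarrow> {b. r w b \<noteq> 0} \<subseteq> F \<Longrightarrow> (\<Sum>b\<in>F. sW (r w b) b) = w"
    by (rule vector_space_coordinates[OF vsW]) blast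
  define F where "F = (\<Union>w\<in>snd ` set (t @ t'). {b. r w b \<noteq> 0})"
  have "finite F" unfolding F_def using r(2) by auto
  have expand: "B v w = (\<Sum>b\<in>F. B v b * r w b)" if "w \<in> snd ` set (t @ t')" for v w
  proof -
    have "{b. r w b \<noteq> 0} \<subseteq> F" using that unfolding F_def by blast
    then have "B v w = B v (\<Sum>b\<in>F. sW (r w b) b)" using r(3) \<open>finite F\<close> by simp
    then show ?thesis
      by (simp add: linear_map_sum[OF l2] linear_map_scale[OF l2] mult.commute)
  qed
  have coords: "(\<Sum>(v,w)\<leftarrow>xs. B v w) = (\<Sum>b\<in>F. tev xs (\<lambda>v. B v b) (\<lambda>w. r w b))"
    if "set xs \<subseteq> set (t @ t')" for xs
  proof -
    have "(\<Sum>(v,w)\<leftarrow>xs. B v w) = (\<Sum>(v,w)\<leftarrow>xs. \<Sum>b\<in>F. B v b * r w b)"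
      by (rule arg_cong[where f=sum_list], rule map_cong) (use that expand in force)+
    then show ?thesis by (simp add: tev_def split_def sum_list_sum_swap)
  qed
  have "(\<Sum>(v,w)\<leftarrow>t. B v w) = (\<Sum>b\<in>F. tev t (\<lambda>v. B v b) (\<lambda>w. r w b))" by (rule coords) auto
  also have "\<dots> = (\<Sum>b\<in>F. tev t' (\<lambda>v. B v b) (\<lambda>w. r w b))"
    using te l1 r(1) unfolding teq_def by auto
  also have "\<dots> = (\<Sum>(v,w)\<leftarrow>t'. B v w)" by (rule coords[symmetric]) auto
  finally show ?thesis .
qed

lemma teq3_sum_trilinear:
  assumes te: "teq3 sU sV sW t t'" and vsV: "vector_space sV" and vsW: "vector_space sW"
    and l1: "\<And>v w. Vector_Spaces.linear sU ((*) :: 'k::field \<Rightarrow> 'k \<Rightarrow> 'k) (\<lambda>u. T u v w)"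
    and l2: "\<And>u w. Vector_Spaces.linear sV ((*) :: 'k \<Rightarrow> 'k \<Rightarrow> 'k) (\<lambda>v. T u v w)"
    and l3: "\<And>u v. Vector_Spaces.linear sW ((*) :: 'k \<Rightarrow> 'k \<Rightarrow> 'k) (T u v)"
  shows "(\<Sum>(u,v,w)\<leftarrow>t. T u v w) = (\<Sum>(u,v,w)\<leftarrow>t'. T u v w)"
proof -
  obtain rV :: "_ \<Rightarrow> _ \<Rightarrow> 'k" where rV: "\<And>b. Vector_Spaces.linear sV (*) (\<lambda>w. rV w b)"
    "\<And>w. finite {b. rV w b \<noteq> 0}"
    "\<And>w F. finite F \<Longrightarrow> {b. rV w b \<noteq> 0} \<subseteq> F \<Longrightarrow> (\<Sum>b\<in>F. sV (rV w b) b) = w"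
    by (rule vector_space_coordinates[OF vsV]) blast
  obtain rW :: "_ \<Rightarrow> _ \<Rightarrow> 'k" where rW: "\<And>b. Vector_Spaces.linear sW (*) (\<lambda>w. rW w b)"
    "\<And>w. finite {b. rW w b \<noteq> 0}"
    "\<And>w F. finite F \<Longrightarrow> {b. rW w b \<noteq> 0} \<subseteq> F \<Longrightarrow> (\<Sum>b\<in>F. sW (rW w b) b) = w"
    by (rule vector_space_coordinates[OF vsW]) blast
  define F1 where "F1 = (\<Union>x\<in>set (t @ t'). {b. rV (fst (snd x)) b \<noteq> 0})"
  define F2 where "F2 = (\<Union>x\<in>set (t @ t'). {b. rW (snd (snd x)) b \<noteq> 0})"
  have "finite F1" unfolding F1_def using rV(2) by auto
  have "finite F2" unfolding F2_def using rW(2) by auto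
  have expand: "T u v w = (\<Sum>b\<in>F1. \<Sum>c\<in>F2. T u b c * rV v b * rW w c)"
    if "(u,v,w) \<in> set (t @ t')" for u v w
  proof -
    have "{b. rV v b \<noteq> 0} \<subseteq> F1" "{b. rW w b \<noteq> 0} \<subseteq> F2"
      using that unfolding F1_def F2_def by force+
    then have "T u v w = T u (\<Sum>b\<in>F1. sV (rV v b) b) (\<Sum>c\<in>F2. sW (rW w c) c)"
      using rV(3) rW(3) \<open>finite F1\<close> \<open>finite F2\<close> by simp
    also have "\<dots> = (\<Sum>b\<in>F1. rV v b * T u b (\<Sum>c\<in>F2. sW (rW w c) c))"
      by (simp add: linear_map_sum[OF l2] linear_map_scale[OF l2])
    also have "\<dots> = (\<Sum>b\<in>F1. rV v b * (\<Sum>c\<in>F2. rW w c * T u b c))"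
      by (simp add: linear_map_sum[OF l3] linear_map_scale[OF l3])
    finally show ?thesis by (simp add: sum_distrib_left mult.commute mult.left_commute)
  qed
  have coords: "(\<Sum>(u,v,w)\<leftarrow>xs. T u v w) =
      (\<Sum>b\<in>F1. \<Sum>c\<in>F2. tev3 xs (\<lambda>u. T u b c) (\<lambda>v. rV v b) (\<lambda>w. rW w c))"
    if "set xs \<subseteq> set (t @ t')" for xs
  proof -
    have "(\<Sum>(u,v,w)\<leftarrow>xs. T u v w) = (\<Sum>(u,v,w)\<leftarrow>xs. \<Sum>b\<in>F1. \<Sum>c\<in>F2. T u b c * rV v b * rW w c)"
      by (rule arg_cong[where f=sum_list], rule map_cong) (use that expand in force)+
    then show ?thesis by (simp add: tev3_def split_def sum_list_sum_swap)
  qed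
  have "(\<Sum>(u,v,w)\<leftarrow>t. T u v w) =
      (\<Sum>b\<in>F1. \<Sum>c\<in>F2. tev3 t (\<lambda>u. T u b c) (\<lambda>v. rV v b) (\<lambda>w. rW w c))"
    by (rule coords) auto
  also have "\<dots> = (\<Sum>b\<in>F1. \<Sum>c\<in>F2. tev3 t' (\<lambda>u. T u b c) (\<lambda>v. rV v b) (\<lambda>w. rW w c))"
    using te l1 rV(1) rW(1) unfolding teq3_def by auto
  also have "\<dots> = (\<Sum>(u,v,w)\<leftarrow>t'. T u v w)" by (rule coords[symmetric]) auto
  finally show ?thesis .
qed

section \<open>Hopf algebras with invariant functionals\<close>

locale hopf_invariant =
  fixes sH :: "'k::field \<Rightarrow> 'h::ab_group_add \<Rightarrow> 'h"
    and mH :: "'h \<Rightarrow> 'h \<Rightarrow> 'h" and uH :: 'h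
    and D :: "'h \<Rightarrow> ('h \<times> 'h) list" and eps :: "'h \<Rightarrow> 'k" and S :: "'h \<Rightarrow> 'h"
    and phi psi :: "'h \<Rightarrow> 'k"
  assumes hopf: "hopf_algebra sH mH uH D eps S"
    and phi_linear: "Vector_Spaces.linear sH (*) phi" and phi_nonzero: "\<exists>x. phi x \<noteq> 0"
    and phi_invariant: "\<And>x. (\<Sum>(a,b)\<leftarrow>D x. sH (phi b) a) = sH (phi x) uH"
    and psi_linear: "Vector_Spaces.linear sH (*) psi" and psi_nonzero: "\<exists>x. psi x \<noteq> 0"
    and psi_invariant: "\<And>x. (\<Sum>(a,b)\<leftarrow>D x. sH (psi a) b) = sH (psi x) uH"
begin

lemma vector_space_H: "vector_space sH"
  using hopf by (simp add: hopf_algebra_def k_algebra_def)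
lemma linear_mH_right: "Vector_Spaces.linear sH sH (mH x)"
  using hopf by (simp add: hopf_algebra_def k_algebra_def bilinear_mult_def)
lemma linear_mH_left: "Vector_Spaces.linear sH sH (\<lambda>x. mH x y)"
  using hopf by (simp add: hopf_algebra_def k_algebra_def bilinear_mult_def)
lemma mH_assoc: "mH (mH x y) z = mH x (mH y z)"
  using hopf by (simp add: hopf_algebra_def k_algebra_def)
lemma mH_unit_left [simp]: "mH uH x = x"
  using hopf by (simp add: hopf_algebra_def)
lemma mH_unit_right [simp]: "mH x uH = x"
  using hopf by (simp add: hopf_algebra_def)
lemma D_mult: "teq sH sH (D (mH x y)) (tmult mH mH (D x) (D y))"
  using hopf by (simp add: hopf_algebra_def)
lemma D_coassoc: "teq3 sH sH sH (map_left3 D (D x)) (map_right3 D (D x))"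
  using hopf by (simp add: hopf_algebra_def)
lemma D_counit: "(\<Sum>(a,b)\<leftarrow>D x. sH (eps a) b) = x"
  using hopf by (simp add: hopf_algebra_def)
lemma linear_S: "Vector_Spaces.linear sH sH S"
  using hopf by (simp add: hopf_algebra_def)
lemma antipode_left: "(\<Sum>(a,b)\<leftarrow>D x. mH (S a) b) = sH (eps x) uH"
  using hopf by (simp add: hopf_algebra_def)
lemma antipode_right: "(\<Sum>(a,b)\<leftarrow>D x. mH a (S b)) = sH (eps x) uH"
  using hopf by (simp add: hopf_algebra_def)

lemma sum_antipode_mult_mult: "(\<Sum>(h1,h2)\<leftarrow>D h. mH (S h1) (mH h2 a)) = sH (eps h) a"
proof -
  have "(\<Sum>(h1,h2)\<leftarrow>D h. mH (S h1) (mH h2 a)) = mH (\<Sum>(h1,h2)\<leftarrow>D h. mH (S h1) h2) a"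
    by (simp add: linear_map_sum_list[OF linear_mH_left] o_def split_def mH_assoc)
  then show ?thesis by (simp add: antipode_left linear_map_scale[OF linear_mH_left])
qed

lemma sum_mult_mult_antipode: "(\<Sum>(h1,h2)\<leftarrow>D h. mH (mH a h1) (S h2)) = sH (eps h) a"
proof -
  have "(\<Sum>(h1,h2)\<leftarrow>D h. mH (mH a h1) (S h2)) = mH a (\<Sum>(h1,h2)\<leftarrow>D h. mH h1 (S h2))"
    by (simp add: linear_map_sum_list[OF linear_mH_right] o_def split_def mH_assoc)
  then show ?thesis by (simp add: antipode_right linear_map_scale[OF linear_mH_right])
qed

lemma psi_antipode_phi_expand:
  "(\<Sum>(a,b)\<leftarrow>D g. psi (S a) * phi (mH b h)) =
   (\<Sum>(u,v,w)\<leftarrow>map_right3 D (D g). \<Sum>(h1,h2)\<leftarrow>D h. psi (mH (S u) (mH v h1)) * phi (mH w h2))"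
proof -
  have "psi (S a) * phi (mH b h) =
      (\<Sum>(b1,b2)\<leftarrow>D b. \<Sum>(h1,h2)\<leftarrow>D h. psi (mH (S a) (mH b1 h1)) * phi (mH b2 h2))" for a b
  proof -
    have l: "Vector_Spaces.linear sH (*) (\<lambda>c. psi (mH (S a) c))"
      by (rule linear_map_compose[OF linear_mH_right psi_linear])
    have "psi (S a) * phi (mH b h) = psi (mH (S a) (sH (phi (mH b h)) uH))"
      by (simp add: linear_map_scale[OF l] mult.commute)
    also have "\<dots> = psi (mH (S a) (\<Sum>(c,d)\<leftarrow>D (mH b h). sH (phi d) c))"
      by (simp add: phi_invariant)
    also have "\<dots> = (\<Sum>(c,d)\<leftarrow>D (mH b h). psi (mH (S a) c) * phi d)"
      by (simp add: linear_map_sum_list[OF l] linear_map_scale[OF l] o_def split_def mult.commute)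
    also have "\<dots> = (\<Sum>(c,d)\<leftarrow>tmult mH mH (D b) (D h). psi (mH (S a) c) * phi d)"
      using D_mult l phi_linear unfolding teq_def tev_def by blast
    finally show ?thesis by (simp add: sum_list_tmult)
  qed
  then show ?thesis by (simp add: sum_list_map_right3)
qed

lemma psi_antipode_phi_contract:
  "(\<Sum>(u,v,w)\<leftarrow>map_left3 D (D g). \<Sum>(h1,h2)\<leftarrow>D h. psi (mH (S u) (mH v h1)) * phi (mH w h2)) =
   psi h * phi g"
proof -
  have antipode: "(\<Sum>(a1,a2)\<leftarrow>D a. \<Sum>(h1,h2)\<leftarrow>D h. psi (mH (S a1) (mH a2 h1)) * phi (mH b h2)) =
      (\<Sum>(h1,h2)\<leftarrow>D h. psi h1 * (eps a * phi (mH b h2)))" for a b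
  proof -
    have "(\<Sum>(a1,a2)\<leftarrow>D a. \<Sum>(h1,h2)\<leftarrow>D h. psi (mH (S a1) (mH a2 h1)) * phi (mH b h2)) =
        (\<Sum>(h1,h2)\<leftarrow>D h. psi (\<Sum>(a1,a2)\<leftarrow>D a. mH (S a1) (mH a2 h1)) * phi (mH b h2))"
      by (subst sum_list_pairs_swap)
        (simp add: linear_map_sum_list[OF psi_linear] o_def split_def sum_list_mult_const)
    then show ?thesis
      by (simp add: sum_antipode_mult_mult linear_map_scale[OF psi_linear] mult_ac)
  qed
  have counit: "(\<Sum>(a,b)\<leftarrow>D g. psi x * (eps a * phi (mH b y))) = psi x * phi (mH g y)" for x y
  proof -
    have l: "Vector_Spaces.linear sH (*) (\<lambda>z. phi (mH z y))"
      by (rule linear_map_compose[OF linear_mH_left phi_linear])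
    have "phi (mH g y) = phi (mH (\<Sum>(a,b)\<leftarrow>D g. sH (eps a) b) y)" by (simp add: D_counit)
    then show ?thesis
      by (simp add: linear_map_sum_list[OF l] linear_map_scale[OF l] o_def split_def
          sum_list_const_mult)
  qed
  have l: "Vector_Spaces.linear sH (*) (\<lambda>z. phi (mH g z))"
    by (rule linear_map_compose[OF linear_mH_right phi_linear])
  have "(\<Sum>(u,v,w)\<leftarrow>map_left3 D (D g). \<Sum>(h1,h2)\<leftarrow>D h. psi (mH (S u) (mH v h1)) * phi (mH w h2)) =
      (\<Sum>(a,b)\<leftarrow>D g. \<Sum>(h1,h2)\<leftarrow>D h. psi h1 * (eps a * phi (mH b h2)))"
    by (simp add: sum_list_map_left3 antipode)
  also have "\<dots> = (\<Sum>(h1,h2)\<leftarrow>D h. psi h1 * phi (mH g h2))"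
    by (simp add: sum_list_pairs_swap[where xs="D g"] counit)
  also have "\<dots> = phi (mH g (\<Sum>(h1,h2)\<leftarrow>D h. sH (psi h1) h2))"
    by (simp add: linear_map_sum_list[OF l] linear_map_scale[OF l] o_def split_def)
  also have "\<dots> = psi h * phi g"
    by (simp add: psi_invariant linear_map_scale[OF l])
  finally show ?thesis .
qed

lemma psi_antipode_phi: "psi h * phi g = (\<Sum>(a,b)\<leftarrow>D g. psi (S a) * phi (mH b h))"
proof -
  define K where "K u v w = (\<Sum>(h1,h2)\<leftarrow>D h. psi (mH (S u) (mH v h1)) * phi (mH w h2))" for u v w
  have "(\<Sum>(u,v,w)\<leftarrow>map_right3 D (D g). K u v w) = (\<Sum>(u,v,w)\<leftarrow>map_left3 D (D g). K u v w)"
  proof (rule teq3_sum_trilinear[OF teq3_sym[OF D_coassoc] vector_space_H vector_space_H])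
    show "Vector_Spaces.linear sH (*) (\<lambda>u. K u v w)" for v w unfolding K_def
      by (rule linear_functional_sum_list[OF vector_space_H])
        (auto intro!: linear_functional_mult_right linear_map_compose[OF linear_S]
          linear_map_compose[OF linear_mH_left psi_linear])
    show "Vector_Spaces.linear sH (*) (\<lambda>v. K u v w)" for u w unfolding K_def
      by (rule linear_functional_sum_list[OF vector_space_H])
        (auto intro!: linear_functional_mult_right linear_map_compose[OF linear_mH_left]
          linear_map_compose[OF linear_mH_right psi_linear])
    show "Vector_Spaces.linear sH (*) (K u v)" for u v unfolding K_def
      by (rule linear_functional_sum_list[OF vector_space_H])
        (auto intro!: linear_functional_mult_left linear_map_compose[OF linear_mH_left phi_linear])
  qed
  then show ?thesis
    using psi_antipode_phi_expand psi_antipode_phi_contract unfolding K_def by simp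
qed

lemma psi_antipode_nonzero: "\<exists>k. psi (S k) \<noteq> 0"
proof -
  obtain h g where "psi h \<noteq> 0" "phi g \<noteq> 0" using psi_nonzero phi_nonzero by blast
  then have "(\<Sum>(a,b)\<leftarrow>D g. psi (S a) * phi (mH b h)) \<noteq> 0" by (simp add: psi_antipode_phi[symmetric])
  then obtain a b where "psi (S a) * phi (mH b h) \<noteq> 0" by (rule sum_list_nonzeroE)
  then show ?thesis by auto
qed

end

section \<open>The slice map of a Galois object\<close>

locale galois_object = hopf_invariant +
  fixes sA :: "'k::field \<Rightarrow> 'a::ab_group_add \<Rightarrow> 'a" and mA :: "'a \<Rightarrow> 'a \<Rightarrow> 'a"
    and alpha :: "'a \<Rightarrow> ('a \<times> 'h::ab_group_add) list"
    and I :: "'i set" and p :: "'i \<Rightarrow> 'a"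
  assumes galois: "I_galois_object sA mA sH mH uH D eps alpha I p"
begin

lemma comodule: "comodule_algebra sA mA sH mH D eps alpha"
  using galois by (simp add: I_galois_object_def)
lemma vector_space_A: "vector_space sA"
  using comodule by (simp add: comodule_algebra_def k_algebra_def)
lemma linear_mA_right: "Vector_Spaces.linear sA sA (mA x)"
  using comodule by (simp add: comodule_algebra_def k_algebra_def bilinear_mult_def)
lemma linear_mA_left: "Vector_Spaces.linear sA sA (\<lambda>x. mA x y)"
  using comodule by (simp add: comodule_algebra_def k_algebra_def bilinear_mult_def)
lemma mA_assoc: "mA (mA x y) z = mA x (mA y z)"
  using comodule by (simp add: comodule_algebra_def k_algebra_def)
lemma alpha_mult: "teq sA sH (alpha (mA x y)) (tmult mA mH (alpha x) (alpha y))"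
  using comodule by (simp add: comodule_algebra_def)
lemma alpha_coassoc: "teq3 sA sH sH (map_left3 alpha (alpha x)) (map_right3 D (alpha x))"
  using comodule by (simp add: comodule_algebra_def)
lemma alpha_counit: "(\<Sum>(a,h)\<leftarrow>alpha x. sA (eps h) a) = x"
  using comodule by (simp add: comodule_algebra_def)
lemma idempotent_nonzero: "i \<in> I \<Longrightarrow> p i \<noteq> 0"
  using galois by (simp add: I_galois_object_def)
lemma idempotent_idem: "i \<in> I \<Longrightarrow> mA (p i) (p i) = p i"
  using galois by (simp add: I_galois_object_def)
lemma idempotents_orthogonal: "i \<in> I \<Longrightarrow> j \<in> I \<Longrightarrow> i \<noteq> j \<Longrightarrow> mA (p i) (p j) = 0"
  using galois by (simp add: I_galois_object_def)
lemma galois_map_surj: "\<exists>t. teq sA sH (galois_map mA alpha t) v"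
  using galois by (simp add: I_galois_object_def)

lemma linear_functional_alpha:
  "Vector_Spaces.linear sA (*) f \<Longrightarrow> Vector_Spaces.linear sH (*) g \<Longrightarrow>
   Vector_Spaces.linear sA ((*) :: 'k \<Rightarrow> 'k \<Rightarrow> 'k) (\<lambda>x. \<Sum>(a,h)\<leftarrow>alpha x. f a * g h)"
  using comodule unfolding comodule_algebra_def tlinear_def tev_def by blast

lemma alpha_idempotent: "i \<in> I \<Longrightarrow> teq sA sH (alpha (p i)) [(p i, uH)]"
proof -
  interpret vector_space sA by (rule vector_space_A)
  assume "i \<in> I"
  then have "p i \<in> span (p ` I)" by (simp add: span_base)
  moreover have "coinvariants sA sH uH alpha = span (p ` I)"
    using galois by (simp add: I_galois_object_def)
  ultimately have "p i \<in> coinvariants sA sH uH alpha" by simp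
  then show ?thesis by (simp add: coinvariants_def)
qed

definition slice :: "'a \<Rightarrow> 'a" where
  "slice x = (\<Sum>(a,h)\<leftarrow>alpha x. sA (psi h) a)"

lemma functional_slice:
  assumes f: "Vector_Spaces.linear sA (*) f"
  shows "f (slice x) = (\<Sum>(a,h)\<leftarrow>alpha x. f a * psi h)"
  by (simp add: slice_def linear_map_sum_list[OF f] linear_map_scale[OF f] o_def split_def
      mult.commute)

lemma invariant_functional_comp_slice:
  assumes th: "Vector_Spaces.linear sA (*) th"
  shows "invariant_functional sA sH uH alpha (\<lambda>x. th (slice x))"
  unfolding invariant_functional_def
proof (intro conjI allI)
  show "Vector_Spaces.linear sA (*) (\<lambda>x. th (slice x))"
    using linear_functional_alpha[OF th psi_linear] by (simp add: functional_slice[OF th])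
  fix x
  show "(\<Sum>(a,h)\<leftarrow>alpha x. sH (th (slice a)) h) = sH (th (slice x)) uH"
  proof (rule eq_by_linear_functionals[OF vector_space_H])
    fix g :: "'h \<Rightarrow> 'k" assume g: "Vector_Spaces.linear sH (*) g"
    have psi_g: "(\<Sum>(b,c)\<leftarrow>D h. psi b * g c) = psi h * g uH" for h
    proof -
      have "psi h * g uH = g (\<Sum>(b,c)\<leftarrow>D h. sH (psi b) c)"
        by (simp add: psi_invariant linear_map_scale[OF g])
      then show ?thesis
        by (simp add: linear_map_sum_list[OF g] linear_map_scale[OF g] o_def split_def)
    qed
    have "g (\<Sum>(a,h)\<leftarrow>alpha x. sH (th (slice a)) h) =
        (\<Sum>(a,h)\<leftarrow>alpha x. \<Sum>(b,c)\<leftarrow>alpha a. th b * psi c * g h)"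
      by (simp add: linear_map_sum_list[OF g] linear_map_scale[OF g] functional_slice[OF th]
          o_def split_def sum_list_mult_const)
    also have "\<dots> = (\<Sum>(u,v,w)\<leftarrow>map_left3 alpha (alpha x). th u * psi v * g w)"
      by (simp add: sum_list_map_left3)
    also have "\<dots> = (\<Sum>(u,v,w)\<leftarrow>map_right3 D (alpha x). th u * psi v * g w)"
      using alpha_coassoc[of x] th psi_linear g unfolding teq3_def tev3_def by blast
    also have "\<dots> = (\<Sum>(a,h)\<leftarrow>alpha x. th a * (\<Sum>(b,c)\<leftarrow>D h. psi b * g c))"
      unfolding sum_list_map_right3 by (simp add: sum_list_const_mult[symmetric] split_def mult.assoc)
    also have "\<dots> = g (sH (th (slice x)) uH)"
      unfolding psi_g
      by (simp add: linear_map_scale[OF g] functional_slice[OF th] sum_list_mult_const[symmetric]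
          split_def mult.assoc)
    finally show "g (\<Sum>(a,h)\<leftarrow>alpha x. sH (th (slice a)) h) = g (sH (th (slice x)) uH)" .
  qed
qed

lemma sum_alpha_mult_idempotent_right:
  assumes i: "i \<in> I" and f: "Vector_Spaces.linear sA (*) f" and g: "Vector_Spaces.linear sH (*) g"
  shows "(\<Sum>(a,h)\<leftarrow>alpha (mA x (p i)). f a * g h) = (\<Sum>(a,h)\<leftarrow>alpha x. f (mA a (p i)) * g h)"
proof -
  have "(\<Sum>(a,h)\<leftarrow>alpha (mA x (p i)). f a * g h) =
      (\<Sum>(a,h)\<leftarrow>tmult mA mH (alpha x) (alpha (p i)). f a * g h)"
    using alpha_mult[of x "p i"] f g unfolding teq_def tev_def by blast
  also have "\<dots> = (\<Sum>(a,b)\<leftarrow>alpha x. \<Sum>(c,d)\<leftarrow>alpha (p i). f (mA a c) * g (mH b d))"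
    by (simp add: sum_list_tmult)
  also have "\<dots> = (\<Sum>(a,b)\<leftarrow>alpha x. f (mA a (p i)) * g b)"
  proof -
    have "(\<Sum>(c,d)\<leftarrow>alpha (p i). f (mA a c) * g (mH b d)) =
        (\<Sum>(c,d)\<leftarrow>[(p i, uH)]. f (mA a c) * g (mH b d))" for a b
    proof -
      have "Vector_Spaces.linear sA (*) (\<lambda>c. f (mA a c))" "Vector_Spaces.linear sH (*) (\<lambda>d. g (mH b d))"
        by (rule linear_map_compose[OF linear_mA_right f], rule linear_map_compose[OF linear_mH_right g])
      then show ?thesis using alpha_idempotent[OF i] unfolding teq_def tev_def by blast
    qed
    then show ?thesis by simp
  qed
  finally show ?thesis .
qed

lemma sum_alpha_mult_idempotent_left:
  assumes i: "i \<in> I" and f: "Vector_Spaces.linear sA (*) f" and g: "Vector_Spaces.linear sH (*) g"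
  shows "(\<Sum>(a,h)\<leftarrow>alpha (mA (p i) x). f a * g h) = (\<Sum>(a,h)\<leftarrow>alpha x. f (mA (p i) a) * g h)"
proof -
  have "(\<Sum>(a,h)\<leftarrow>alpha (mA (p i) x). f a * g h) =
      (\<Sum>(a,h)\<leftarrow>tmult mA mH (alpha (p i)) (alpha x). f a * g h)"
    using alpha_mult[of "p i" x] f g unfolding teq_def tev_def by blast
  also have "\<dots> = (\<Sum>(a,b)\<leftarrow>alpha (p i). \<Sum>(c,d)\<leftarrow>alpha x. f (mA a c) * g (mH b d))"
    by (simp add: sum_list_tmult)
  also have "\<dots> = (\<Sum>(a,b)\<leftarrow>[(p i, uH)]. \<Sum>(c,d)\<leftarrow>alpha x. f (mA a c) * g (mH b d))"
  proof (rule teq_sum_bilinear[OF alpha_idempotent[OF i] vector_space_H])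
    show "Vector_Spaces.linear sA (*) (\<lambda>a. \<Sum>(c,d)\<leftarrow>alpha x. f (mA a c) * g (mH b d))" for b
      by (rule linear_functional_sum_list[OF vector_space_A])
        (auto intro!: linear_functional_mult_right linear_map_compose[OF linear_mA_left f])
    show "Vector_Spaces.linear sH (*) (\<lambda>b. \<Sum>(c,d)\<leftarrow>alpha x. f (mA a c) * g (mH b d))" for a
      by (rule linear_functional_sum_list[OF vector_space_H])
        (auto intro!: linear_functional_mult_left linear_map_compose[OF linear_mH_left g])
  qed
  finally show ?thesis by simp
qed

lemma slice_mult_idempotent_right: "i \<in> I \<Longrightarrow> slice (mA x (p i)) = mA (slice x) (p i)"
proof (rule eq_by_linear_functionals[OF vector_space_A])
  fix f :: "'a \<Rightarrow> 'k" assume i: "i \<in> I" and f: "Vector_Spaces.linear sA (*) f"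
  have f': "Vector_Spaces.linear sA (*) (\<lambda>y. f (mA y (p i)))"
    by (rule linear_map_compose[OF linear_mA_left f])
  show "f (slice (mA x (p i))) = f (mA (slice x) (p i))"
    using sum_alpha_mult_idempotent_right[OF i f psi_linear]
    by (simp add: functional_slice[OF f] functional_slice[OF f'])
qed

lemma slice_mult_idempotent_left: "i \<in> I \<Longrightarrow> slice (mA (p i) x) = mA (p i) (slice x)"
proof (rule eq_by_linear_functionals[OF vector_space_A])
  fix f :: "'a \<Rightarrow> 'k" assume i: "i \<in> I" and f: "Vector_Spaces.linear sA (*) f"
  have f': "Vector_Spaces.linear sA (*) (\<lambda>y. f (mA (p i) y))"
    by (rule linear_map_compose[OF linear_mA_right f])
  show "f (slice (mA (p i) x)) = f (mA (p i) (slice x))"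
    using sum_alpha_mult_idempotent_left[OF i f psi_linear]
    by (simp add: functional_slice[OF f] functional_slice[OF f'])
qed

text \<open>The Galois map is inverted on \<open>p\<^sub>i \<otimes> k\<close> through this expansion of \<open>E(a) b\<close>, where \<open>b\<close> is
  moved into the argument of \<open>\<alpha>\<close> at the cost of an antipode: \<open>E(a) b = \<Sum> (id \<otimes> \<psi>)(\<alpha>(a b\<^sub>0) (1 \<otimes> S b\<^sub>1))\<close>.\<close>

lemma slice_mult:
  assumes f: "Vector_Spaces.linear sA (*) f"
  shows "f (mA (slice a) b) =
    (\<Sum>(x,h)\<leftarrow>alpha b. \<Sum>(y,c)\<leftarrow>alpha (mA a x). f y * psi (mH c (S h)))"
proof -
  define G where
    "G x0 x1 h = (\<Sum>(a0,a1)\<leftarrow>alpha a. f (mA a0 x0) * psi (mH (mH a1 x1) (S h)))" for x0 x1 h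
  have mult: "(\<Sum>(y,c)\<leftarrow>alpha (mA a x). f y * psi (mH c (S h))) = (\<Sum>(x0,x1)\<leftarrow>alpha x. G x0 x1 h)"
    for x h
  proof -
    have "Vector_Spaces.linear sH (*) (\<lambda>c. psi (mH c (S h)))"
      by (rule linear_map_compose[OF linear_mH_left psi_linear])
    then have "(\<Sum>(y,c)\<leftarrow>alpha (mA a x). f y * psi (mH c (S h))) =
        (\<Sum>(y,c)\<leftarrow>tmult mA mH (alpha a) (alpha x). f y * psi (mH c (S h)))"
      using alpha_mult[of a x] f unfolding teq_def tev_def by blast
    also have "\<dots> = (\<Sum>(a0,a1)\<leftarrow>alpha a. \<Sum>(x0,x1)\<leftarrow>alpha x.
        f (mA a0 x0) * psi (mH (mH a1 x1) (S h)))"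
      by (simp add: sum_list_tmult)
    also have "\<dots> = (\<Sum>(x0,x1)\<leftarrow>alpha x. G x0 x1 h)"
      unfolding G_def by (rule sum_list_pairs_swap)
    finally show ?thesis .
  qed
  have antipode: "(\<Sum>(h1,h2)\<leftarrow>D h. G x h1 h2) = eps h * (\<Sum>(a0,a1)\<leftarrow>alpha a. f (mA a0 x) * psi a1)"
    for x h
  proof -
    have "(\<Sum>(h1,h2)\<leftarrow>D h. G x h1 h2) =
        (\<Sum>(a0,a1)\<leftarrow>alpha a. \<Sum>(h1,h2)\<leftarrow>D h. f (mA a0 x) * psi (mH (mH a1 h1) (S h2)))"
      unfolding G_def by (rule sum_list_pairs_swap)
    also have "\<dots> = (\<Sum>(a0,a1)\<leftarrow>alpha a. f (mA a0 x) * psi (\<Sum>(h1,h2)\<leftarrow>D h. mH (mH a1 h1) (S h2)))"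
      by (simp add: linear_map_sum_list[OF psi_linear] o_def split_def sum_list_const_mult)
    also have "\<dots> = (\<Sum>(a0,a1)\<leftarrow>alpha a. f (mA a0 x) * psi (sH (eps h) a1))"
      unfolding sum_mult_mult_antipode ..
    finally show ?thesis
      by (simp add: linear_map_scale[OF psi_linear] sum_list_const_mult[symmetric] split_def mult_ac)
  qed
  have counit: "(\<Sum>(x,h)\<leftarrow>alpha b. eps h * (\<Sum>(a0,a1)\<leftarrow>alpha a. f (mA a0 x) * psi a1)) =
      f (mA (slice a) b)"
  proof -
    have fb: "Vector_Spaces.linear sA (*) (\<lambda>y. f (mA y b))"
      by (rule linear_map_compose[OF linear_mA_left f])
    have expand_b: "f (mA a0 b) = (\<Sum>(x,h)\<leftarrow>alpha b. eps h * f (mA a0 x))" for a0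
    proof -
      have l: "Vector_Spaces.linear sA (*) (\<lambda>z. f (mA a0 z))"
        by (rule linear_map_compose[OF linear_mA_right f])
      have "f (mA a0 b) = f (mA a0 (\<Sum>(x,h)\<leftarrow>alpha b. sA (eps h) x))" by (simp add: alpha_counit)
      then show ?thesis by (simp add: linear_map_sum_list[OF l] linear_map_scale[OF l] o_def split_def)
    qed
    have "f (mA (slice a) b) = (\<Sum>(a0,a1)\<leftarrow>alpha a. (\<Sum>(x,h)\<leftarrow>alpha b. eps h * f (mA a0 x)) * psi a1)"
      by (simp add: functional_slice[OF fb] expand_b[symmetric])
    also have "\<dots> = (\<Sum>(a0,a1)\<leftarrow>alpha a. \<Sum>(x,h)\<leftarrow>alpha b. eps h * (f (mA a0 x) * psi a1))"
      by (simp add: sum_list_mult_const[symmetric] split_def mult.assoc)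
    also have "\<dots> = (\<Sum>(x,h)\<leftarrow>alpha b. \<Sum>(a0,a1)\<leftarrow>alpha a. eps h * (f (mA a0 x) * psi a1))"
      by (rule sum_list_pairs_swap)
    also have "\<dots> = (\<Sum>(x,h)\<leftarrow>alpha b. eps h * (\<Sum>(a0,a1)\<leftarrow>alpha a. f (mA a0 x) * psi a1))"
      by (simp add: sum_list_const_mult split_def)
    finally show ?thesis by simp
  qed
  have "(\<Sum>(x,h)\<leftarrow>alpha b. \<Sum>(y,c)\<leftarrow>alpha (mA a x). f y * psi (mH c (S h))) =
      (\<Sum>(u,v,w)\<leftarrow>map_left3 alpha (alpha b). G u v w)"
    unfolding mult sum_list_map_left3 ..
  also have "\<dots> = (\<Sum>(u,v,w)\<leftarrow>map_right3 D (alpha b). G u v w)"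
  proof (rule teq3_sum_trilinear[OF alpha_coassoc vector_space_H vector_space_H])
    show "Vector_Spaces.linear sA (*) (\<lambda>u. G u v w)" for v w unfolding G_def
      by (rule linear_functional_sum_list[OF vector_space_A])
        (auto intro!: linear_functional_mult_right linear_map_compose[OF linear_mA_right f])
    show "Vector_Spaces.linear sH (*) (\<lambda>v. G u v w)" for u w unfolding G_def
      by (rule linear_functional_sum_list[OF vector_space_H])
        (auto intro!: linear_functional_mult_left linear_map_compose[OF linear_mH_right]
          linear_map_compose[OF linear_mH_left psi_linear])
    show "Vector_Spaces.linear sH (*) (G u v)" for u v unfolding G_def
      by (rule linear_functional_sum_list[OF vector_space_H])
        (auto intro!: linear_functional_mult_left linear_map_compose[OF linear_S]
          linear_map_compose[OF linear_mH_right psi_linear])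
  qed
  also have "\<dots> = f (mA (slice a) b)"
    unfolding sum_list_map_right3 antipode by (rule counit)
  finally show ?thesis by simp
qed

lemma exists_slice_fixed_by_idempotent:
  assumes j: "j \<in> I"
  shows "\<exists>y. slice y \<noteq> 0 \<and> mA (slice y) (p j) = slice y"
proof -
  obtain h where h: "psi h \<noteq> 0" using psi_nonzero by blast
  obtain t where t: "teq sA sH (galois_map mA alpha t) [(p j, h)]" using galois_map_surj by blast
  have "(\<Sum>(a,b)\<leftarrow>t. mA a (slice (mA b (p j)))) = sA (psi h) (p j)"
  proof (rule eq_by_linear_functionals[OF vector_space_A])
    fix f :: "'a \<Rightarrow> 'k" assume f: "Vector_Spaces.linear sA (*) f"
    have fj: "Vector_Spaces.linear sA (*) (\<lambda>y. f (mA y (p j)))"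
      by (rule linear_map_compose[OF linear_mA_left f])
    have summand: "f (mA a (slice (mA b (p j)))) = (\<Sum>(c,h)\<leftarrow>alpha b. f (mA (mA a c) (p j)) * psi h)"
      for a b
    proof -
      have fa: "Vector_Spaces.linear sA (*) (\<lambda>y. f (mA a y))"
        by (rule linear_map_compose[OF linear_mA_right f])
      show ?thesis
        using functional_slice[OF fa] sum_alpha_mult_idempotent_right[OF j fa psi_linear]
        by (simp add: mA_assoc)
    qed
    have "f (\<Sum>(a,b)\<leftarrow>t. mA a (slice (mA b (p j)))) = (\<Sum>(a,b)\<leftarrow>t. f (mA a (slice (mA b (p j)))))"
      by (simp add: linear_map_sum_list[OF f] o_def split_def)
    also have "\<dots> = (\<Sum>(x,h)\<leftarrow>galois_map mA alpha t. f (mA x (p j)) * psi h)"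
      unfolding sum_list_galois_map summand ..
    also have "\<dots> = f (mA (p j) (p j)) * psi h"
      using t fj psi_linear unfolding teq_def tev_def by simp
    finally show "f (\<Sum>(a,b)\<leftarrow>t. mA a (slice (mA b (p j)))) = f (sA (psi h) (p j))"
      by (simp add: idempotent_idem[OF j] linear_map_scale[OF f] mult.commute)
  qed
  also have "\<dots> \<noteq> 0" using h idempotent_nonzero[OF j] vector_space.scale_eq_0_iff[OF vector_space_A]
    by blast
  finally obtain a b where "mA a (slice (mA b (p j))) \<noteq> 0" by (rule sum_list_nonzeroE)
  then have "slice (mA b (p j)) \<noteq> 0" using linear_map_0[OF linear_mA_right] by metis
  moreover have "mA (slice (mA b (p j))) (p j) = slice (mA b (p j))"
    using slice_mult_idempotent_right[OF j, of "mA b (p j)"] by (simp add: mA_assoc idempotent_idem[OF j])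
  ultimately show ?thesis by blast
qed

lemma exists_idempotent_times_slice_nonzero:
  assumes i: "i \<in> I"
  shows "\<exists>y. mA (p i) (slice y) \<noteq> 0"
proof -
  obtain k where k: "psi (S k) \<noteq> 0" using psi_antipode_nonzero by blast
  obtain t where t: "teq sA sH (galois_map mA alpha t) [(p i, k)]" using galois_map_surj by blast
  have "(\<Sum>(a,b)\<leftarrow>t. mA (mA (p i) (slice a)) b) = sA (psi (S k)) (p i)"
  proof (rule eq_by_linear_functionals[OF vector_space_A])
    fix f :: "'a \<Rightarrow> 'k" assume f: "Vector_Spaces.linear sA (*) f"
    have fi: "Vector_Spaces.linear sA (*) (\<lambda>y. f (mA (p i) y))"
      by (rule linear_map_compose[OF linear_mA_right f])
    define B where "B x h = (\<Sum>(y,c)\<leftarrow>alpha x. f (mA (p i) y) * psi (mH c (S h)))" for x h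
    have "f (\<Sum>(a,b)\<leftarrow>t. mA (mA (p i) (slice a)) b) = (\<Sum>(a,b)\<leftarrow>t. \<Sum>(x,h)\<leftarrow>alpha b. B (mA a x) h)"
      using slice_mult[OF fi] by (simp add: linear_map_sum_list[OF f] o_def split_def mA_assoc B_def)
    also have "\<dots> = (\<Sum>(x,h)\<leftarrow>galois_map mA alpha t. B x h)"
      by (simp add: sum_list_galois_map)
    also have "\<dots> = B (p i) k"
    proof -
      have "(\<Sum>(x,h)\<leftarrow>galois_map mA alpha t. B x h) = (\<Sum>(x,h)\<leftarrow>[(p i, k)]. B x h)"
      proof (rule teq_sum_bilinear[OF t vector_space_H])
        show "Vector_Spaces.linear sA (*) (\<lambda>x. B x h)" for h unfolding B_def
          by (rule linear_functional_alpha[OF fi linear_map_compose[OF linear_mH_left psi_linear]])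
        show "Vector_Spaces.linear sH (*) (B x)" for x unfolding B_def
          by (rule linear_functional_sum_list[OF vector_space_H])
            (auto intro!: linear_functional_mult_left linear_map_compose[OF linear_S]
              linear_map_compose[OF linear_mH_right psi_linear])
      qed
      then show ?thesis by simp
    qed
    also have "\<dots> = f (mA (p i) (p i)) * psi (S k)"
      using alpha_idempotent[OF i] fi linear_map_compose[OF linear_mH_left psi_linear]
      unfolding B_def teq_def tev_def by simp
    finally show "f (\<Sum>(a,b)\<leftarrow>t. mA (mA (p i) (slice a)) b) = f (sA (psi (S k)) (p i))"
      by (simp add: idempotent_idem[OF i] linear_map_scale[OF f] mult.commute)
  qed
  also have "\<dots> \<noteq> 0" using k idempotent_nonzero[OF i] vector_space.scale_eq_0_iff[OF vector_space_A]
    by blast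
  finally obtain a b where "mA (mA (p i) (slice a)) b \<noteq> 0" by (rule sum_list_nonzeroE)
  then show ?thesis using linear_map_0[OF linear_mA_left] by metis
qed

lemma exists_right_complete_invariant_functional:
  "\<exists>psiA. invariant_functional sA sH uH alpha psiA \<and> right_complete mA I p psiA"
proof -
  obtain y where y: "\<And>j. j \<in> I \<Longrightarrow> slice (y j) \<noteq> 0 \<and> mA (slice (y j)) (p j) = slice (y j)"
    using exists_slice_fixed_by_idempotent by metis
  obtain th where th: "Vector_Spaces.linear sA (*) th" "\<forall>j\<in>I. th (slice (y j)) = 1"
    by (rule exists_functional_one_on_idempotent_family[of sA mA I p "\<lambda>j. slice (y j)", THEN exE])
      (use y in \<open>auto simp: vector_space_A mA_assoc linear_mA_left linear_map_0[OF linear_mA_right]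
        idempotents_orthogonal\<close>)
  have "th (slice (mA (y j) (p j))) \<noteq> 0" if "j \<in> I" for j
    using th y[OF that] slice_mult_idempotent_right[OF that] that by simp
  then have "right_complete mA I p (\<lambda>x. th (slice x))"
    unfolding right_complete_def by blast
  then show ?thesis using invariant_functional_comp_slice[OF th(1)] by blast
qed

lemma exists_left_complete_invariant_functional:
  "\<exists>psiA. invariant_functional sA sH uH alpha psiA \<and> left_complete mA I p psiA"
proof -
  obtain y where y: "\<And>i. i \<in> I \<Longrightarrow> mA (p i) (slice (y i)) \<noteq> 0"
    using exists_idempotent_times_slice_nonzero by metis
  \<comment> \<open>the opposite multiplication turns the left ideals \<open>p\<^sub>i A\<close> into right ideals\<close>
  obtain th where th: "Vector_Spaces.linear sA (*) th" "\<forall>i\<in>I. th (mA (p i) (slice (y i))) = 1"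
    by (rule exists_functional_one_on_idempotent_family[of sA "\<lambda>x z. mA z x" I p
          "\<lambda>i. mA (p i) (slice (y i))", THEN exE])
      (use y in \<open>auto simp: vector_space_A mA_assoc linear_mA_right linear_map_0[OF linear_mA_left]
        idempotents_orthogonal idempotent_idem simp flip: mA_assoc\<close>)
  have "th (slice (mA (p i) (y i))) \<noteq> 0" if "i \<in> I" for i
    using th slice_mult_idempotent_left[OF that] that by simp
  then have "left_complete mA I p (\<lambda>x. th (slice x))"
    unfolding left_complete_def by blast
  then show ?thesis using invariant_functional_comp_slice[OF th(1)] by blast
qed

end

theorem mainTheorem17:
  fixes sH :: "'k::field \<Rightarrow> 'h::ab_group_add \<Rightarrow> 'h"
    and mH :: "'h \<Rightarrow> 'h \<Rightarrow> 'h" and uH :: 'h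
    and D :: "'h \<Rightarrow> ('h \<times> 'h) list" and eps :: "'h \<Rightarrow> 'k" and S :: "'h \<Rightarrow> 'h"
    and sA :: "'k \<Rightarrow> 'a::ab_group_add \<Rightarrow> 'a" and mA :: "'a \<Rightarrow> 'a \<Rightarrow> 'a"
    and alpha :: "'a \<Rightarrow> ('a \<times> 'h) list"
    and I :: "'i set" and p :: "'i \<Rightarrow> 'a"
  assumes "hopf_algebra sH mH uH D eps S"
    and "has_invariant_functionals sH uH D"
    and "I_galois_object sA mA sH mH uH D eps alpha I p"
  shows "(\<exists>psiA. invariant_functional sA sH uH alpha psiA \<and> left_complete mA I p psiA) \<and>
         (\<exists>psiA'. invariant_functional sA sH uH alpha psiA' \<and> right_complete mA I p psiA')"
proof -
  obtain phi psi where
    "Vector_Spaces.linear sH (*) phi" "\<exists>x. phi x \<noteq> 0" "\<forall>x. (\<Sum>(a,b)\<leftarrow>D x. sH (phi b) a) = sH (phi x) uH"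
    "Vector_Spaces.linear sH (*) psi" "\<exists>x. psi x \<noteq> 0" "\<forall>x. (\<Sum>(a,b)\<leftarrow>D x. sH (psi a) b) = sH (psi x) uH"
    using assms(2) unfolding has_invariant_functionals_def by blast
  then interpret galois_object sH mH uH D eps S phi psi sA mA alpha I p
    by (intro galois_object.intro hopf_invariant.intro galois_object_axioms.intro)
      (use assms(1,3) in auto)
  show ?thesis
    using exists_left_complete_invariant_functional exists_right_complete_invariant_functional
    by blast
qed

end
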